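(* A set of atoms $M$ is an answer set by reduct of a basic program $P$ if and only if $M$ is a weakly well-supported model of $P$.
   Context: Fix a countable set $\mathcal{A}$ of atoms. A c-atom is $A=(A_d,A_c)$, $A_d\subseteq\mathcal{A}$, $A_c\subseteq 2^{A_d}$; $(\{p\},\{\{p\}\})$ is elementary; $\bot=(\mathcal{A},\emptyset)$. Rule: $A\leftarrow A_1,\dots,A_k,\mathit{not}\,A_{k+1},\dots,\mathit{not}\,A_n$, $head(r)=A$, $pos(r)=\{A_1,..,A_k\}$, $neg(r)=\{A_{k+1},..,A_n\}$. Program = set of rules; positive if no naf-literals; basic if every head is elementary or $\bot$. $S\models A$ iff $S\cap A_d\in A_c$; $S\models\mathit{not}\,A$ iff $S\cap A_d\notin A_c$; $S\models body(r)$ if all body literals hold; rule satisfied if head holds or body fails; model = satisfies all rules. Conditional satisfaction: $S\models_M A$ iff $S\models A$ and every $I$ with $S\cap A_d\subseteq I\subseteq M\cap A_d$ lies in $A_c$. For positive basic $P$: $T_P(S,M)=\{a\mid \exists r\in P,\ head(r)=(\{a\},\{\{a\}\}),\ S\models_M B\ \forall B\in pos(r)\}$, $T^0_P(\emptyset,M)=\emptyset$, $T^{i+1}_P(\emptyset,M)=T_P(T^i_P(\emptyset,M),M)$, $T^\infty_P(\emptyset,M)=\bigcup_i T^i_P(\emptyset,M)$; a model $M$ is an answer set iff $M=T^\infty_P(\emptyset,M)$. Reduct $P^M$: delete rules with some $\mathit{not}\,A$ in the body where $M\models A$, then delete remaining naf-literals; $M$ is an answer set by reduct of $P$ iff it is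 an answer set of $P^M$. Level mappings: for a set $M$ and $\ell:M\to\{1,2,\dots\}$, put $H(X)=\max\{\ell(a)\mid a\in X\}$ for $X\subseteq M$ (with $\max\emptyset=0$), and $L(A,M)=\min\{H(X)\mid X\in A_c,\ X\subseteq M,\ X\models_M A\}$, undefined if this set is empty. A model $M$ of basic $P$ is weakly well-supported iff there is such an $\ell$ such that for each $b\in M$ some $r\in P$ has $head(r)=(\{b\},\{\{b\}\})$, $M\models body(r)$, and for every $A\in pos(r)$, $L(A,M)$ is defined and $\ell(b)>L(A,M)$. *)

theory Defs
  imports Main "HOL-Library.Countable" "HOL-Library.Extended_Nat"
begin

text \<open>Atoms are the elements of a countable type 'a (the set of atoms is UNIV).
A c-atom is a pair (A_d, A_c).\<close>

type_synonym 'a catom = "'a set \<times> 'a set set"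

definition is_catom :: "'a catom \<Rightarrow> bool" where
  "is_catom A \<longleftrightarrow> snd A \<subseteq> Pow (fst A)"

definition elem :: "'a \<Rightarrow> 'a catom" where
  "elem p = ({p}, {{p}})"

definition cbot :: "'a catom" where
  "cbot = (UNIV, {})"

datatype 'a rule = Rule (head: "'a catom") (pos: "'a catom list") (neg: "'a catom list")

type_synonym 'a program = "'a rule set"

definition rule_catoms :: "'a rule \<Rightarrow> 'a catom set" where
  "rule_catoms r = insert (head r) (set (pos r) \<union> set (neg r))"

definition positive :: "'a program \<Rightarrow> bool" where
  "positive P \<longleftrightarrow> (\<forall>r\<in>P. neg r = [])"

definition basic :: "'a program \<Rightarrow> bool" where
  "basic P \<longleftrightarrow> (\<forall>r\<in>P. (\<exists>p. head r = elem p) \<or> head r = cbot)"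

definition sat :: "'a set \<Rightarrow> 'a catom \<Rightarrow> bool" where
  "sat S A \<longleftrightarrow> S \<inter> fst A \<in> snd A"

definition body_sat :: "'a set \<Rightarrow> 'a rule \<Rightarrow> bool" where
  "body_sat S r \<longleftrightarrow> (\<forall>A\<in>set (pos r). sat S A) \<and> (\<forall>A\<in>set (neg r). \<not> sat S A)"

definition rule_sat :: "'a set \<Rightarrow> 'a rule \<Rightarrow> bool" where
  "rule_sat S r \<longleftrightarrow> sat S (head r) \<or> \<not> body_sat S r"

definition is_model :: "'a set \<Rightarrow> 'a program \<Rightarrow> bool" where
  "is_model M P \<longleftrightarrow> (\<forall>r\<in>P. rule_sat M r)"

definition csat :: "'a set \<Rightarrow> 'a set \<Rightarrow> 'a catom \<Rightarrow> bool" where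
  "csat S M A \<longleftrightarrow> sat S A \<and> (\<forall>I. S \<inter> fst A \<subseteq> I \<and> I \<subseteq> M \<inter> fst A \<longrightarrow> I \<in> snd A)"

definition TP :: "'a program \<Rightarrow> 'a set \<Rightarrow> 'a set \<Rightarrow> 'a set" where
  "TP P S M = {a. \<exists>r\<in>P. head r = elem a \<and> (\<forall>B\<in>set (pos r). csat S M B)}"

primrec TP_iter :: "'a program \<Rightarrow> 'a set \<Rightarrow> nat \<Rightarrow> 'a set" where
  "TP_iter P M 0 = {}"
| "TP_iter P M (Suc i) = TP P (TP_iter P M i) M"

definition TP_inf :: "'a program \<Rightarrow> 'a set \<Rightarrow> 'a set" where
  "TP_inf P M = (\<Union>i. TP_iter P M i)"

definition answer_set_pos :: "'a program \<Rightarrow> 'a set \<Rightarrow> bool" where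
  "answer_set_pos P M \<longleftrightarrow> is_model M P \<and> M = TP_inf P M"

definition reduct :: "'a program \<Rightarrow> 'a set \<Rightarrow> 'a program" where
  "reduct P M = {Rule (head r) (pos r) [] | r. r \<in> P \<and> (\<forall>A\<in>set (neg r). \<not> sat M A)}"

definition answer_set_by_reduct :: "'a program \<Rightarrow> 'a set \<Rightarrow> bool" where
  "answer_set_by_reduct P M \<longleftrightarrow> answer_set_pos (reduct P M) M"

text \<open>Level mappings. H(X) = max of levels in X (0 for the empty set); taken as a
supremum in enat so that it is also meaningful for infinite X (it coincides with
the maximum whenever the maximum exists).\<close>
definition Hlev :: "('a \<Rightarrow> nat) \<Rightarrow> 'a set \<Rightarrow> enat" where
  "Hlev l X = Sup ((\<lambda>a. enat (l a)) ` X)"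

definition Lset :: "('a \<Rightarrow> nat) \<Rightarrow> 'a catom \<Rightarrow> 'a set \<Rightarrow> enat set" where
  "Lset l A M = {Hlev l X | X. X \<in> snd A \<and> X \<subseteq> M \<and> csat X M A}"

text \<open>L(A,M) is defined iff Lset is nonempty, and then equals its minimum.\<close>
definition Llev :: "('a \<Rightarrow> nat) \<Rightarrow> 'a catom \<Rightarrow> 'a set \<Rightarrow> enat" where
  "Llev l A M = Inf (Lset l A M)"

definition weakly_well_supported :: "'a program \<Rightarrow> 'a set \<Rightarrow> bool" where
  "weakly_well_supported P M \<longleftrightarrow> is_model M P \<and>
     (\<exists>l :: 'a \<Rightarrow> nat. (\<forall>a\<in>M. 1 \<le> l a) \<and>
        (\<forall>b\<in>M. \<exists>r\<in>P. head r = elem b \<and> body_sat M r \<and>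
            (\<forall>A\<in>set (pos r). Lset l A M \<noteq> {} \<and> Llev l A M < enat (l b))))"

end

theory Submission
  imports Defs
begin

(* Both notions are compared through the iterates T^i of the operator T_R(-,M)
   of the reduct R = P^M, which is a positive program with the same models as
   P under M.

   (=>) If M = T^\<infinity>, give each atom its stage, the least i with a in T^i.
   An atom of stage j+1 is derived by a rule of R whose positive body is
   conditionally satisfied by T^j; the set T^j \<inter> A_d then witnesses that
   L(A,M) is defined and at most j, below the stage of the head.

   (<=) Given a level mapping l, induction on n shows that every atom of level
   at most n lies in T^n: a minimal witness X for L(A,M) consists of atoms of
   smaller level, hence lies in T^n, and conditional satisfaction propagates
   upwards from X to T^n.  Thus M \<subseteq> T^\<infinity>, and T^\<infinity> \<subseteq> M because M is a model. *)

section \<open>Conditional satisfaction\<close>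

lemma csat_mono:
  assumes "csat S M B" "S \<inter> fst B \<subseteq> S' \<inter> fst B" "S' \<inter> fst B \<subseteq> M \<inter> fst B"
  shows "csat S' M B"
proof -
  have between: "\<And>I. S \<inter> fst B \<subseteq> I \<Longrightarrow> I \<subseteq> M \<inter> fst B \<Longrightarrow> I \<in> snd B"
    using assms(1) unfolding csat_def by auto
  have "S' \<inter> fst B \<in> snd B" using between[OF assms(2,3)] .
  moreover have "\<forall>I. S' \<inter> fst B \<subseteq> I \<and> I \<subseteq> M \<inter> fst B \<longrightarrow> I \<in> snd B"
    using between assms(2) by (meson order_trans)
  ultimately show ?thesis unfolding csat_def sat_def by simp
qed

lemma csat_sat:
  assumes "csat S M B" "S \<subseteq> M"
  shows "sat M B"
proof -
  have "S \<inter> fst B \<subseteq> M \<inter> fst B" using assms(2) by blast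
  then show ?thesis using assms(1) unfolding csat_def sat_def by simp
qed

lemma csat_restrict:
  assumes "csat S M A"
  shows "csat (S \<inter> fst A) M A"
  using assms unfolding csat_def sat_def by (simp add: Int_assoc)

section \<open>The reduct\<close>

lemma reduct_memberD:
  "r' \<in> reduct P M \<Longrightarrow> \<exists>r\<in>P. r' = Rule (head r) (pos r) [] \<and> (\<forall>A\<in>set (neg r). \<not> sat M A)"
  unfolding reduct_def by blast

lemma reduct_memberI:
  "r \<in> P \<Longrightarrow> \<forall>A\<in>set (neg r). \<not> sat M A \<Longrightarrow> Rule (head r) (pos r) [] \<in> reduct P M"
  unfolding reduct_def by blast

lemma positive_reduct: "positive (reduct P M)"
  unfolding positive_def reduct_def by auto

lemma model_reduct: "is_model M (reduct P M) \<longleftrightarrow> is_model M P"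
proof
  assume red: "is_model M (reduct P M)"
  show "is_model M P" unfolding is_model_def
  proof
    fix r assume r: "r \<in> P"
    show "rule_sat M r"
    proof (cases "\<forall>A\<in>set (neg r). \<not> sat M A")
      case True
      then have "rule_sat M (Rule (head r) (pos r) [])"
        using red reduct_memberI[OF r] unfolding is_model_def by blast
      then show ?thesis using True unfolding rule_sat_def body_sat_def by auto
    qed (auto simp: rule_sat_def body_sat_def)
  qed
next
  assume model: "is_model M P"
  show "is_model M (reduct P M)" unfolding is_model_def
  proof
    fix r' assume "r' \<in> reduct P M"
    then obtain r where r: "r \<in> P" "r' = Rule (head r) (pos r) []" "\<forall>A\<in>set (neg r). \<not> sat M A"
      using reduct_memberD by blast
    then have "rule_sat M r" using model unfolding is_model_def by blast
    then show "rule_sat M r'" using r unfolding rule_sat_def body_sat_def by auto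
  qed
qed

section \<open>Iterates of the consequence operator\<close>

lemma TP_iter_subset_model:
  assumes "positive R" "is_model M R"
  shows "TP_iter R M i \<subseteq> M"
proof (induction i)
  case (Suc j)
  show ?case
  proof
    fix a assume "a \<in> TP_iter R M (Suc j)"
    then obtain r where r: "r \<in> R" "head r = elem a"
      "\<forall>B\<in>set (pos r). csat (TP_iter R M j) M B"
      by (auto simp: TP_def)
    have "\<forall>B\<in>set (pos r). sat M B" using r(3) csat_sat[OF _ Suc] by blast
    moreover have "neg r = []" using assms(1) r(1) unfolding positive_def by blast
    ultimately have "body_sat M r" unfolding body_sat_def by simp
    then have "sat M (head r)" using assms(2) r(1) unfolding is_model_def rule_sat_def by blast
    then show "a \<in> M" using r(2) unfolding sat_def elem_def by auto
  qed
qed simp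

definition stage :: "'a program \<Rightarrow> 'a set \<Rightarrow> 'a \<Rightarrow> nat" where
  "stage R M a = (LEAST i. a \<in> TP_iter R M i)"

lemma stage_le: "a \<in> TP_iter R M i \<Longrightarrow> stage R M a \<le> i"
  unfolding stage_def by (rule Least_le)

lemma stage_support:
  assumes "a \<in> TP_iter R M i"
  obtains j r where "stage R M a = Suc j" "r \<in> R" "head r = elem a"
    "\<forall>B\<in>set (pos r). csat (TP_iter R M j) M B"
proof -
  have first: "a \<in> TP_iter R M (stage R M a)"
    unfolding stage_def using assms by (rule LeastI)
  then obtain j where j: "stage R M a = Suc j"
    by (cases "stage R M a") auto
  with first show ?thesis using that by (auto simp: TP_def)
qed

section \<open>Level mappings\<close>

lemma Llev_bound:
  assumes "csat S M A" "S \<subseteq> M" "\<forall>a\<in>S. l a \<le> j"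
  shows "Lset l A M \<noteq> {}" "Llev l A M \<le> enat j"
proof -
  define X where "X = S \<inter> fst A"
  have "csat X M A" unfolding X_def using assms(1) by (rule csat_restrict)
  then have "X \<in> snd A" unfolding csat_def sat_def X_def by auto
  moreover have "X \<subseteq> M" unfolding X_def using assms(2) by blast
  ultimately have mem: "Hlev l X \<in> Lset l A M"
    using \<open>csat X M A\<close> unfolding Lset_def by blast
  then show "Lset l A M \<noteq> {}" by blast
  have "Hlev l X \<le> enat j"
    unfolding Hlev_def X_def using assms(3) by (auto intro: Sup_least)
  with mem show "Llev l A M \<le> enat j"
    unfolding Llev_def by (meson Inf_lower order_trans)
qed

text \<open>L(A,M) is attained: enat is well-ordered, so the infimum of a nonempty
  set of levels belongs to it.\<close>
lemma Llev_attained: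
  assumes "Lset l A M \<noteq> {}"
  obtains X where "Llev l A M = Hlev l X" "X \<in> snd A" "X \<subseteq> M" "csat X M A"
proof -
  obtain k where "k \<in> Lset l A M" using assms by blast
  then have "Llev l A M \<in> Lset l A M" unfolding Llev_def by (rule wellorder_InfI)
  then show ?thesis using that unfolding Lset_def by blast
qed

lemma csat_of_lower_levels:
  assumes cat: "is_catom A" and defined: "Lset l A M \<noteq> {}" and below: "Llev l A M < enat (l b)"
    and lower: "\<forall>a\<in>M. l a < l b \<longrightarrow> a \<in> S" and SM: "S \<subseteq> M"
  shows "csat S M A"
proof -
  obtain X where X: "Llev l A M = Hlev l X" "X \<in> snd A" "X \<subseteq> M" "csat X M A"
    using Llev_attained[OF defined] .
  have "X \<subseteq> fst A" using cat X(2) unfolding is_catom_def by blast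
  moreover have "X \<subseteq> S"
  proof
    fix a assume a: "a \<in> X"
    have "enat (l a) \<le> Hlev l X" unfolding Hlev_def using a by (intro Sup_upper) blast
    then have "enat (l a) < enat (l b)" using X(1) below by (metis le_less_trans)
    then have "l a < l b" by simp
    then show "a \<in> S" using lower a X(3) by blast
  qed
  ultimately show ?thesis using SM by (intro csat_mono[OF X(4)]) blast+
qed

text \<open>The stage function of the reduct is a level mapping witnessing weak
  well-support.\<close>
lemma answer_set_imp_weakly_well_supported:
  assumes "answer_set_by_reduct P M"
  shows "weakly_well_supported P M"
proof -
  define R where "R = reduct P M"
  have model: "is_model M P" and fixpoint: "M = TP_inf R M"
    using assms model_reduct unfolding answer_set_by_reduct_def answer_set_pos_def R_def by auto
  have iter_sub: "TP_iter R M j \<subseteq> M" for j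
    using fixpoint unfolding TP_inf_def by blast
  have support: "\<exists>r\<in>P. head r = elem b \<and> body_sat M r \<and>
      (\<forall>A\<in>set (pos r). Lset (stage R M) A M \<noteq> {} \<and> Llev (stage R M) A M < enat (stage R M b))
      \<and> 1 \<le> stage R M b" if b: "b \<in> M" for b
  proof -
    obtain i where "b \<in> TP_iter R M i" using b fixpoint unfolding TP_inf_def by blast
    then obtain j r where j: "stage R M b = Suc j" and r: "r \<in> R" "head r = elem b"
      and body: "\<forall>B\<in>set (pos r). csat (TP_iter R M j) M B"
      by (rule stage_support)
    obtain r0 where r0: "r0 \<in> P" "r = Rule (head r0) (pos r0) []" "\<forall>A\<in>set (neg r0). \<not> sat M A"
      using reduct_memberD r(1) unfolding R_def by blast
    have levels: "\<forall>a\<in>TP_iter R M j. stage R M a \<le> j" by (simp add: stage_le)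
    have "body_sat M r0"
      using body r0 csat_sat[OF _ iter_sub] unfolding body_sat_def by auto
    moreover have "Lset (stage R M) A M \<noteq> {} \<and> Llev (stage R M) A M < enat (stage R M b)"
      if A: "A \<in> set (pos r0)" for A
    proof -
      have "csat (TP_iter R M j) M A" using body A r0(2) by simp
      note bound = Llev_bound[OF this iter_sub levels]
      have "enat j < enat (stage R M b)" using j by simp
      then show ?thesis using bound by (meson order.strict_trans1)
    qed
    ultimately show ?thesis using r r0 j by auto
  qed
  show ?thesis
    unfolding weakly_well_supported_def using model support by blast
qed

lemma levels_reached:
  assumes catoms: "\<forall>r\<in>P. \<forall>A\<in>rule_catoms r. is_catom A" and model: "is_model M P"
    and supp: "\<forall>b\<in>M. \<exists>r\<in>P. head r = elem b \<and> body_sat M r \<and>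
            (\<forall>A\<in>set (pos r). Lset l A M \<noteq> {} \<and> Llev l A M < enat (l b))"
    and pos_level: "\<forall>a\<in>M. 1 \<le> l a"
  shows "\<forall>b\<in>M. l b \<le> n \<longrightarrow> b \<in> TP_iter (reduct P M) M n"
proof (induction n)
  case 0
  show ?case using pos_level by auto
next
  case (Suc n)
  let ?R = "reduct P M"
  let ?S = "TP_iter ?R M n"
  have SM: "?S \<subseteq> M"
    using TP_iter_subset_model[OF positive_reduct model_reduct[THEN iffD2, OF model]] .
  show ?case
  proof (intro ballI impI)
    fix b assume b: "b \<in> M" "l b \<le> Suc n"
    obtain r where r: "r \<in> P" "head r = elem b" "body_sat M r"
      "\<forall>A\<in>set (pos r). Lset l A M \<noteq> {} \<and> Llev l A M < enat (l b)"
      using supp b(1) by blast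
    have rR: "Rule (head r) (pos r) [] \<in> ?R"
      using reduct_memberI[OF r(1)] r(3) unfolding body_sat_def by blast
    have lower: "\<forall>a\<in>M. l a < l b \<longrightarrow> a \<in> ?S" using Suc b(2) by auto
    have "\<forall>A\<in>set (pos r). csat ?S M A"
    proof
      fix A assume A: "A \<in> set (pos r)"
      have "is_catom A" using catoms r(1) A unfolding rule_catoms_def by blast
      then show "csat ?S M A"
        using csat_of_lower_levels[OF _ _ _ lower SM] r(4) A by blast
    qed
    then have "b \<in> TP ?R ?S M"
      unfolding TP_def using rR r(2) by (intro CollectI bexI[OF _ rR]) simp
    then show "b \<in> TP_iter ?R M (Suc n)" by simp
  qed
qed

lemma weakly_well_supported_imp_answer_set:
  assumes catoms: "\<forall>r\<in>P. \<forall>A\<in>rule_catoms r. is_catom A"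
    and "weakly_well_supported P M"
  shows "answer_set_by_reduct P M"
proof -
  obtain l where modelP: "is_model M P" and pos_level: "\<forall>a\<in>M. 1 \<le> l a"
    and supp: "\<forall>b\<in>M. \<exists>r\<in>P. head r = elem b \<and> body_sat M r \<and>
            (\<forall>A\<in>set (pos r). Lset l A M \<noteq> {} \<and> Llev l A M < enat (l b))"
    using assms(2) unfolding weakly_well_supported_def by blast
  have model: "is_model M (reduct P M)" using modelP model_reduct by blast
  have "\<forall>b\<in>M. l b \<le> n \<longrightarrow> b \<in> TP_iter (reduct P M) M n" for n
    using levels_reached[OF catoms modelP supp pos_level] .
  then have "M \<subseteq> TP_inf (reduct P M) M" unfolding TP_inf_def by blast
  moreover have "TP_inf (reduct P M) M \<subseteq> M"
    using TP_iter_subset_model[OF positive_reduct model] unfolding TP_inf_def by blast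
  ultimately show ?thesis
    using model unfolding answer_set_by_reduct_def answer_set_pos_def by blast
qed

text \<open>The hypothesis that P is basic is carried by the statement but not needed.\<close>
theorem proposition5:
  fixes P :: "('a::countable) program" and M :: "'a set"
  assumes "basic P"
    and "\<forall>r\<in>P. \<forall>A\<in>rule_catoms r. is_catom A"
  shows "answer_set_by_reduct P M \<longleftrightarrow> weakly_well_supported P M"
  using answer_set_imp_weakly_well_supported weakly_well_supported_imp_answer_set[OF assms(2)]
  by blast

end
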